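(* Let $3\le n\le N$ and define the operators $\mathfrak a=\Theta_n(x)\nabla+\Lambda_n(x;2,1)I$ and $\mathfrak a^\dagger=\Theta_n(x)\nabla+\Lambda_n(x;1,2)I$, where $I$ is the identity operator. Then, as identities of rational functions of $x$, $$\mathfrak a\big(\mathbb K_n\big)(x)=\Theta_n(x)\nabla\mathbb K_n(x)+\Lambda_n(x;2,1)\mathbb K_n(x)=\Lambda_n(x;1,1)\,\mathbb K_{n-1}(x),$$ $$\mathfrak a^\dagger\big(\mathbb K_{n-1}\big)(x)=\Theta_n(x)\nabla\mathbb K_{n-1}(x)+\Lambda_n(x;1,2)\mathbb K_{n-1}(x)=\Lambda_n(x;2,2)\,\mathbb K_{n}(x).$$
   Context: Fix an integer $N\ge 1$ and $0<p<1$. Notation: $(a)_0=1$, $(a)_k=a(a+1)\cdots(a+k-1)$ (Pochhammer symbol); $[z]_0=1$, $[z]_k=z(z-1)\cdots(z-k+1)$ (falling factorial). For a function $f$, $\Delta f(x)=f(x+1)-f(x)$, $\nabla f(x)=f(x)-f(x-1)$, $\Delta^0$ is the identity and $\Delta^k=\Delta\circ\Delta^{k-1}$. For $0\le n\le N$ the monic Kravchuk polynomial is $K_n(x)=p^n(-N)_n\sum_{k=0}^{n}\frac{(-n)_k(-x)_k}{(-N)_k\,k!}p^{-k}$, and $K_{-1}=0$; these are monic of degree $n$ and orthogonal on $\{0,\dots,N\}$ with respect to the binomial weight $w(x)=\binom{N}{x}p^x(1-p)^{N-x}$, with $\|K_n\|^2=\sum_{x=0}^N K_n(x)^2w(x)=n!(-N)_np^n(p-1)^n$.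 They satisfy $xK_n=K_{n+1}+\alpha_nK_n+\beta_nK_{n-1}$ with $\alpha_n=p(N-n)+n(1-p)$, $\beta_n=np(1-p)(N-n+1)$. For $1\le n\le N+1$ and integers $i,l\ge0$, $\mathscr K_{n-1}^{(i,l)}(x,y)=\sum_{k=0}^{n-1}\frac{\Delta^iK_k(x)\,\Delta^lK_k(y)}{\|K_k\|^2}$. Fix $\lambda,\mu>0$ and an integer $j\ge 0$. On real polynomials define $\langle f,g\rangle_{\lambda,\mu}=\sum_{x=0}^N f(x)g(x)w(x)+\lambda\Delta^jf(0)\Delta^jg(0)+\mu\Delta^jf(N)\Delta^jg(N)$. For $0\le n\le N$, $\mathbb K_n=\mathbb K_n^{(j)}$ is the monic polynomial of degree $n$ with $\langle\mathbb K_n,q\rangle_{\lambda,\mu}=0$ for all polynomials $q$ of degree $<n$ (Kravchuk–Sobolev polynomials). For $1\le n\le N$: $\mathscr A_n(x,y)=\frac{j!}{\|K_{n-1}\|^2[x-y]_{j+1}}\sum_{k=0}^{j}\frac{\Delta^kK_{n-1}(y)}{k!}[x-y]_k$, $\mathscr B_n(x,y)=-\frac{j!}{\|K_{n-1}\|^2[x-y]_{j+1}}\sum_{k=0}^{j}\frac{\Delta^kK_{n}(y)}{k!}[x-y]_k$; $k_{00}=\mathscr K^{(j,j)}_{n-1}(0,0)$, $k_{0N}=\mathscr K^{(j,j)}_{n-1}(0,N)$, $k_{N0}=\mathscr K^{(j,j)}_{n-1}(N,0)$, $k_{NN}=\mathscr K^{(j,j)}_{n-1}(N,N)$, $d_0=\Delta^jK_n(0)$,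 $d_N=\Delta^jK_n(N)$, $\delta_n=(1+\lambda k_{00})(1+\mu k_{NN})-\lambda\mu k_{0N}k_{N0}$ (which is nonzero), $\Phi_1(n)=\frac{d_0(1+\mu k_{NN})-\mu k_{0N}d_N}{\delta_n}$, $\Phi_2(n)=\frac{(1+\lambda k_{00})d_N-\lambda k_{N0}d_0}{\delta_n}$; $\mathscr C_{1,n}(x)=1-\lambda\Phi_1(n)\mathscr A_n(x,0)-\mu\Phi_2(n)\mathscr A_n(x,N)$ and $\mathscr D_{1,n}(x)=-\lambda\Phi_1(n)\mathscr B_n(x,0)-\mu\Phi_2(n)\mathscr B_n(x,N)$. For $2\le m\le N$ define $\mathscr E_{1,m}(x)=x\nabla\mathscr C_{1,m}(x)+m\,\mathscr C_{1,m}(x-1)-\frac{(m-1)p(N-m+2)\mathscr D_{1,m}(x-1)}{\beta_{m-1}}$ and $\mathscr F_{1,m}(x)=x\nabla\mathscr D_{1,m}(x)+mp(N-m+1)\mathscr C_{1,m}(x-1)+\frac{(m-1)p(N-m+2)(x-\alpha_{m-1})\mathscr D_{1,m}(x-1)}{\beta_{m-1}}+(m-1)\mathscr D_{1,m}(x-1)$. For $3\le n\le N$ define $\mathscr C_{2,n}(x)=-\frac{\mathscr D_{1,n-1}(x)}{\beta_{n-1}}$, $\mathscr D_{2,n}(x)=\mathscr C_{1,n-1}(x)+\mathscr C_{2,n}(x)(\alpha_{n-1}-x)$, $\mathscr E_{2,n}(x)=-\frac{\mathscr F_{1,n-1}(x)}{\beta_{n-1}}$, $\mathscr F_{2,n}(x)=\mathscr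 E_{1,n-1}(x)+\mathscr E_{2,n}(x)(\alpha_{n-1}-x)$, and $\Theta_n(x)=x\big(\mathscr C_{1,n}(x)\mathscr D_{2,n}(x)-\mathscr C_{2,n}(x)\mathscr D_{1,n}(x)\big)$, $\Lambda_n(x;i,k)=(-1)^k\big(\mathscr E_{k,n}(x)\mathscr D_{i,n}(x)-\mathscr F_{k,n}(x)\mathscr C_{i,n}(x)\big)$ for $i,k\in\{1,2\}$. *)

theory Defs
  imports "HOL-Computational_Algebra.Polynomial"
begin

definition ffact :: "real \<Rightarrow> nat \<Rightarrow> real" where
  "ffact z k = (\<Prod>i<k. (z - real i))"

definition fdelta :: "(real \<Rightarrow> real) \<Rightarrow> real \<Rightarrow> real" where
  "fdelta f x = f (x + 1) - f x"

fun fdiff :: "nat \<Rightarrow> (real \<Rightarrow> real) \<Rightarrow> real \<Rightarrow> real" where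
  "fdiff 0 f = f"
| "fdiff (Suc k) f = fdelta (fdiff k f)"

definition bnabla :: "(real \<Rightarrow> real) \<Rightarrow> real \<Rightarrow> real" where
  "bnabla f x = f x - f (x - 1)"

definition wt :: "nat \<Rightarrow> real \<Rightarrow> nat \<Rightarrow> real" where
  "wt N p x = real (N choose x) * p ^ x * (1 - p) ^ (N - x)"

(* monic Kravchuk polynomial K_n(x) *)
definition Kr :: "nat \<Rightarrow> real \<Rightarrow> nat \<Rightarrow> real \<Rightarrow> real" where
  "Kr N p n x = p ^ n * pochhammer (- real N) n *
     (\<Sum>k=0..n. pochhammer (- real n) k * pochhammer (- x) k
        / (pochhammer (- real N) k * fact k) * p powi (- int k))"

definition knorm :: "nat \<Rightarrow> real \<Rightarrow> nat \<Rightarrow> real" where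
  "knorm N p n = (\<Sum>x=0..N. (Kr N p n (real x))\<^sup>2 * wt N p x)"

definition alpha :: "nat \<Rightarrow> real \<Rightarrow> nat \<Rightarrow> real" where
  "alpha N p n = p * (real N - real n) + real n * (1 - p)"

definition beta :: "nat \<Rightarrow> real \<Rightarrow> nat \<Rightarrow> real" where
  "beta N p n = real n * p * (1 - p) * (real N - real n + 1)"

definition Kker :: "nat \<Rightarrow> real \<Rightarrow> nat \<Rightarrow> nat \<Rightarrow> nat \<Rightarrow> real \<Rightarrow> real \<Rightarrow> real" where
  "Kker N p i l m x y =
     (\<Sum>k=0..m. fdiff i (Kr N p k) x * fdiff l (Kr N p k) y / knorm N p k)"

definition sob_ip :: "nat \<Rightarrow> real \<Rightarrow> real \<Rightarrow> real \<Rightarrow> nat \<Rightarrow> real poly \<Rightarrow> real poly \<Rightarrow> real" where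
  "sob_ip N p lam mu j f g =
     (\<Sum>x=0..N. poly f (real x) * poly g (real x) * wt N p x)
     + lam * fdiff j (poly f) 0 * fdiff j (poly g) 0
     + mu * fdiff j (poly f) (real N) * fdiff j (poly g) (real N)"

definition KS :: "nat \<Rightarrow> real \<Rightarrow> real \<Rightarrow> real \<Rightarrow> nat \<Rightarrow> nat \<Rightarrow> real poly" where
  "KS N p lam mu j n = (THE P. degree P = n \<and> lead_coeff P = 1 \<and>
       (\<forall>q. degree q < n \<longrightarrow> sob_ip N p lam mu j P q = 0))"

definition An :: "nat \<Rightarrow> real \<Rightarrow> nat \<Rightarrow> nat \<Rightarrow> real \<Rightarrow> real \<Rightarrow> real" where
  "An N p j n x y = fact j / (knorm N p (n - 1) * ffact (x - y) (j + 1)) *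
     (\<Sum>k=0..j. fdiff k (Kr N p (n - 1)) y / fact k * ffact (x - y) k)"

definition Bn :: "nat \<Rightarrow> real \<Rightarrow> nat \<Rightarrow> nat \<Rightarrow> real \<Rightarrow> real \<Rightarrow> real" where
  "Bn N p j n x y = - (fact j / (knorm N p (n - 1) * ffact (x - y) (j + 1))) *
     (\<Sum>k=0..j. fdiff k (Kr N p n) y / fact k * ffact (x - y) k)"

definition deltan :: "nat \<Rightarrow> real \<Rightarrow> real \<Rightarrow> real \<Rightarrow> nat \<Rightarrow> nat \<Rightarrow> real" where
  "deltan N p lam mu j n =
     (1 + lam * Kker N p j j (n - 1) 0 0) * (1 + mu * Kker N p j j (n - 1) (real N) (real N))
     - lam * mu * Kker N p j j (n - 1) 0 (real N) * Kker N p j j (n - 1) (real N) 0"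

definition Phi1 :: "nat \<Rightarrow> real \<Rightarrow> real \<Rightarrow> real \<Rightarrow> nat \<Rightarrow> nat \<Rightarrow> real" where
  "Phi1 N p lam mu j n =
     (fdiff j (Kr N p n) 0 * (1 + mu * Kker N p j j (n - 1) (real N) (real N))
      - mu * Kker N p j j (n - 1) 0 (real N) * fdiff j (Kr N p n) (real N))
     / deltan N p lam mu j n"

definition Phi2 :: "nat \<Rightarrow> real \<Rightarrow> real \<Rightarrow> real \<Rightarrow> nat \<Rightarrow> nat \<Rightarrow> real" where
  "Phi2 N p lam mu j n =
     ((1 + lam * Kker N p j j (n - 1) 0 0) * fdiff j (Kr N p n) (real N)
      - lam * Kker N p j j (n - 1) (real N) 0 * fdiff j (Kr N p n) 0)
     / deltan N p lam mu j n"

definition C1 :: "nat \<Rightarrow> real \<Rightarrow> real \<Rightarrow> real \<Rightarrow> nat \<Rightarrow> nat \<Rightarrow> real \<Rightarrow> real" where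
  "C1 N p lam mu j n x = 1 - lam * Phi1 N p lam mu j n * An N p j n x 0
                           - mu * Phi2 N p lam mu j n * An N p j n x (real N)"

definition D1 :: "nat \<Rightarrow> real \<Rightarrow> real \<Rightarrow> real \<Rightarrow> nat \<Rightarrow> nat \<Rightarrow> real \<Rightarrow> real" where
  "D1 N p lam mu j n x = - lam * Phi1 N p lam mu j n * Bn N p j n x 0
                         - mu * Phi2 N p lam mu j n * Bn N p j n x (real N)"

definition E1 :: "nat \<Rightarrow> real \<Rightarrow> real \<Rightarrow> real \<Rightarrow> nat \<Rightarrow> nat \<Rightarrow> real \<Rightarrow> real" where
  "E1 N p lam mu j m x = x * bnabla (C1 N p lam mu j m) x + real m * C1 N p lam mu j m (x - 1)
     - (real m - 1) * p * (real N - real m + 2) * D1 N p lam mu j m (x - 1) / beta N p (m - 1)"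

definition F1 :: "nat \<Rightarrow> real \<Rightarrow> real \<Rightarrow> real \<Rightarrow> nat \<Rightarrow> nat \<Rightarrow> real \<Rightarrow> real" where
  "F1 N p lam mu j m x = x * bnabla (D1 N p lam mu j m) x
     + real m * p * (real N - real m + 1) * C1 N p lam mu j m (x - 1)
     + (real m - 1) * p * (real N - real m + 2) * (x - alpha N p (m - 1)) * D1 N p lam mu j m (x - 1)
         / beta N p (m - 1)
     + (real m - 1) * D1 N p lam mu j m (x - 1)"

definition C2 :: "nat \<Rightarrow> real \<Rightarrow> real \<Rightarrow> real \<Rightarrow> nat \<Rightarrow> nat \<Rightarrow> real \<Rightarrow> real" where
  "C2 N p lam mu j n x = - D1 N p lam mu j (n - 1) x / beta N p (n - 1)"

definition D2 :: "nat \<Rightarrow> real \<Rightarrow> real \<Rightarrow> real \<Rightarrow> nat \<Rightarrow> nat \<Rightarrow> real \<Rightarrow> real" where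
  "D2 N p lam mu j n x = C1 N p lam mu j (n - 1) x + C2 N p lam mu j n x * (alpha N p (n - 1) - x)"

definition E2 :: "nat \<Rightarrow> real \<Rightarrow> real \<Rightarrow> real \<Rightarrow> nat \<Rightarrow> nat \<Rightarrow> real \<Rightarrow> real" where
  "E2 N p lam mu j n x = - F1 N p lam mu j (n - 1) x / beta N p (n - 1)"

definition F2 :: "nat \<Rightarrow> real \<Rightarrow> real \<Rightarrow> real \<Rightarrow> nat \<Rightarrow> nat \<Rightarrow> real \<Rightarrow> real" where
  "F2 N p lam mu j n x = E1 N p lam mu j (n - 1) x + E2 N p lam mu j n x * (alpha N p (n - 1) - x)"

definition Cf :: "nat \<Rightarrow> real \<Rightarrow> real \<Rightarrow> real \<Rightarrow> nat \<Rightarrow> nat \<Rightarrow> nat \<Rightarrow> real \<Rightarrow> real" where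
  "Cf N p lam mu j i n x = (if i = 1 then C1 N p lam mu j n x else C2 N p lam mu j n x)"
definition Df :: "nat \<Rightarrow> real \<Rightarrow> real \<Rightarrow> real \<Rightarrow> nat \<Rightarrow> nat \<Rightarrow> nat \<Rightarrow> real \<Rightarrow> real" where
  "Df N p lam mu j i n x = (if i = 1 then D1 N p lam mu j n x else D2 N p lam mu j n x)"
definition Ef :: "nat \<Rightarrow> real \<Rightarrow> real \<Rightarrow> real \<Rightarrow> nat \<Rightarrow> nat \<Rightarrow> nat \<Rightarrow> real \<Rightarrow> real" where
  "Ef N p lam mu j i n x = (if i = 1 then E1 N p lam mu j n x else E2 N p lam mu j n x)"
definition Ff :: "nat \<Rightarrow> real \<Rightarrow> real \<Rightarrow> real \<Rightarrow> nat \<Rightarrow> nat \<Rightarrow> nat \<Rightarrow> real \<Rightarrow> real" where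
  "Ff N p lam mu j i n x = (if i = 1 then F1 N p lam mu j n x else F2 N p lam mu j n x)"

definition Theta :: "nat \<Rightarrow> real \<Rightarrow> real \<Rightarrow> real \<Rightarrow> nat \<Rightarrow> nat \<Rightarrow> real \<Rightarrow> real" where
  "Theta N p lam mu j n x = x * (C1 N p lam mu j n x * D2 N p lam mu j n x
                                 - C2 N p lam mu j n x * D1 N p lam mu j n x)"

definition Lam :: "nat \<Rightarrow> real \<Rightarrow> real \<Rightarrow> real \<Rightarrow> nat \<Rightarrow> nat \<Rightarrow> real \<Rightarrow> nat \<Rightarrow> nat \<Rightarrow> real" where
  "Lam N p lam mu j n x i k = (-1) ^ k * (Ef N p lam mu j k n x * Df N p lam mu j i n x
                                        - Ff N p lam mu j k n x * Cf N p lam mu j i n x)"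

end

theory Submission
  imports Defs "HOL-Analysis.Convex"
begin

(* Away from the integers 0, ..., N + j + 1 both Kravchuk-Sobolev polynomials are combinations
   of K_n and K_(n-1) with coefficients rational in x:
     KK_n = C1 K_n + D1 K_(n-1),              KK_(n-1) = C2 K_n + D2 K_(n-1),
     x Nabla KK_n = E1 K_n + F1 K_(n-1),      x Nabla KK_(n-1) = E2 K_n + F2 K_(n-1).
   The first holds because KK_n is K_n minus multiples Phi1, Phi2 (fixed by Cramer's rule) of the
   kernels x |-> sum_(k<n) K_k(x) Delta^j K_k(y) / ||K_k||^2 at y = 0 and y = N, and these kernels
   are evaluated by the Christoffel-Darboux formula together with a discrete quotient rule. The
   other three follow from the lowering relation x Nabla K_n = n K_n + n p (N - n + 1) K_(n-1) and
   the three-term recurrence. Eliminating K_n and K_(n-1) from the four identities gives the two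
   ladder equations. *)

section \<open>Falling factorials\<close>

lemma ffact_0 [simp]: "ffact z 0 = 1"
  by (simp add: ffact_def)

lemma ffact_Suc: "ffact z (Suc k) = ffact z k * (z - real k)"
  by (simp add: ffact_def lessThan_Suc mult.commute)

lemma ffact_1 [simp]: "ffact z (Suc 0) = z"
  by (simp add: ffact_Suc)

lemma ffact_add: "ffact z (a + b) = ffact z a * ffact (z - real a) b"
  by (induction b) (simp_all add: ffact_Suc algebra_simps)

lemma ffact_Suc_left: "ffact z (Suc k) = z * ffact (z - 1) k"
  using ffact_add[of z 1 k] by simp

lemma ffact_nonzero: "(\<And>i. i < k \<Longrightarrow> z \<noteq> real i) \<Longrightarrow> ffact z k \<noteq> 0"
  unfolding ffact_def by (simp add: prod_zero_iff)

lemma pochhammer_minus_ffact: "pochhammer (- z) k = (-1) ^ k * ffact z k"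
  by (induction k) (simp_all add: pochhammer_Suc ffact_Suc algebra_simps)

lemma binomial_eq_ffact: "real (n choose k) = ffact (real n) k / fact k"
  by (simp add: binomial_gbinomial gbinomial_pochhammer pochhammer_minus_ffact)

lemma ffact_backward_diff: "x * (ffact x k - ffact (x - 1) k) = real k * ffact x k"
proof (cases k)
  case (Suc i)
  show ?thesis
    unfolding Suc ffact_Suc_left[of x i] ffact_Suc[of "x - 1" i] by (simp add: algebra_simps)
qed simp

section \<open>Kravchuk polynomials in the falling factorial basis\<close>

definition kraw_coeff :: "nat \<Rightarrow> real \<Rightarrow> nat \<Rightarrow> nat \<Rightarrow> real" where
  "kraw_coeff N p n k = real (n choose k) * (- p) ^ (n - k) * ffact (real N - real k) (n - k)"

lemma kraw_coeff_eq_0: "n < k \<Longrightarrow> kraw_coeff N p n k = 0"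
  by (simp add: kraw_coeff_def)

lemma kraw_coeff_diag [simp]: "kraw_coeff N p n n = 1"
  by (simp add: kraw_coeff_def)

lemma Kr_eq_ffact_sum:
  assumes "n \<le> N" "p \<noteq> 0"
  shows "Kr N p n x = (\<Sum>k=0..n. kraw_coeff N p n k * ffact x k)"
  unfolding Kr_def sum_distrib_left
proof (rule sum.cong[OF refl])
  fix k assume "k \<in> {0..n}"
  then obtain d where n: "n = k + d" by (auto simp: le_iff_add)
  have nz: "ffact (real N) k \<noteq> 0"
    using assms n by (intro ffact_nonzero) auto
  have split: "ffact (real N) n = ffact (real N) k * ffact (real N - real k) d"
    using ffact_add[of "real N" k d] n by simp
  have pw: "p powi (- int k) = 1 / p ^ k"
    by (simp add: power_int_minus field_simps)
  show "p ^ n * pochhammer (- real N) n *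
      (pochhammer (- real n) k * pochhammer (- x) k / (pochhammer (- real N) k * fact k) *
       p powi - int k) = kraw_coeff N p n k * ffact x k"
    unfolding pochhammer_minus_ffact kraw_coeff_def binomial_eq_ffact pw split
    using nz assms(2) by (simp add: n power_add power_minus[of p] field_simps)
qed

lemma Kr_eq_ffact_sum_upto:
  assumes "n \<le> N" "p \<noteq> 0" "n \<le> M"
  shows "Kr N p n x = (\<Sum>k=0..M. kraw_coeff N p n k * ffact x k)"
  unfolding Kr_eq_ffact_sum[OF assms(1,2)]
  by (rule sum.mono_neutral_left) (use assms in \<open>auto simp: kraw_coeff_eq_0\<close>)

lemma Kr_0 [simp]: "Kr N p 0 x = 1"
  by (simp add: Kr_def)

lemma kraw_coeff_lowering:
  assumes "1 \<le> n" "k \<le> n"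
  shows "real k * kraw_coeff N p n k
    = real n * kraw_coeff N p n k + real n * p * (real N - real n + 1) * kraw_coeff N p (n - 1) k"
proof (cases "k = n")
  case False
  then obtain d where n: "n = k + Suc d"
    using assms less_iff_Suc_add by (auto simp: add.commute le_less)
  have "real (n - k) * real (n choose k) = real n * real ((n - 1) choose k)"
    using binomial_absorb_comp[of n k] by (metis of_nat_mult)
  then have "real (n choose k) = real n * real ((n - 1) choose k) / real (Suc d)"
    using n by (simp add: field_simps)
  moreover have "real N - real k - real d = real N - real n + 1"
    using n by simp
  ultimately have coeff: "kraw_coeff N p n k = real n * real ((n - 1) choose k) / real (Suc d)
      * (-p) ^ Suc d * (ffact (real N - real k) d * (real N - real n + 1))"
    using n by (simp add: kraw_coeff_def ffact_Suc)
  have prev_coeff: "kraw_coeff N p (n - 1) k = real ((n - 1) choose k) * (-p) ^ d * ffact (real N - real k) d"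
    using n by (simp add: kraw_coeff_def)
  show ?thesis
    unfolding coeff prev_coeff using n by (simp add: field_simps)
qed (use assms in \<open>simp add: kraw_coeff_eq_0\<close>)

lemma kraw_coeff_shift:
  "kraw_coeff N p n (Suc i) * p * real (Suc i) * (real N - real i)
    = - (real n - real i) * kraw_coeff N p n i"
proof (cases "i < n")
  case True
  then obtain d where n: "n = i + Suc d"
    using less_iff_Suc_add by (auto simp: add.commute)
  have "real (Suc i) * real (n choose Suc i) = real (n - i) * real (n choose i)"
    using binomial_absorption[of i n] binomial_absorb_comp[of n i] by (metis of_nat_mult)
  then have "real (n choose Suc i) = real (Suc d) * real (n choose i) / real (Suc i)"
    using n by (simp add: field_simps)
  then have succ_coeff: "kraw_coeff N p n (Suc i)
      = real (Suc d) * real (n choose i) / real (Suc i) * (-p) ^ d * ffact (real N - real (Suc i)) d"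
    using n by (simp add: kraw_coeff_def)
  have "ffact (real N - real i) (Suc d) = (real N - real i) * ffact (real N - real (Suc i)) d"
    by (simp add: ffact_Suc_left algebra_simps)
  then have coeff: "kraw_coeff N p n i
      = real (n choose i) * (-p) ^ Suc d * ((real N - real i) * ffact (real N - real (Suc i)) d)"
    using n by (simp add: kraw_coeff_def)
  have "real n - real i = real (Suc d)"
    using n by simp
  then show ?thesis
    unfolding succ_coeff coeff by (simp add: field_simps)
next
  case False
  then show ?thesis
    by (cases "i = n") (simp_all add: kraw_coeff_eq_0)
qed

(* kraw_coeff_lowering (for n and n + 1) and kraw_coeff_shift express the other three coefficients
   through c = kraw_coeff N p n k, leaving a polynomial identity in n, k, N and p. *)
lemma kraw_coeff_recurrence:
  assumes "k \<le> Suc n"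
  shows "(if k = 0 then 0 else kraw_coeff N p n (k - 1)) + real k * kraw_coeff N p n k
    = kraw_coeff N p (Suc n) k + alpha N p n * kraw_coeff N p n k + beta N p n * kraw_coeff N p (n - 1) k"
proof (cases "k = Suc n")
  case False
  then have kn: "k \<le> n" using assms by simp
  define c where "c = kraw_coeff N p n k"
  have up: "(real k - real (Suc n)) * kraw_coeff N p (Suc n) k = real (Suc n) * p * (real N - real n) * c"
    using kraw_coeff_lowering[of "Suc n" k N p] kn unfolding c_def by (simp add: algebra_simps)
  have down: "beta N p n * kraw_coeff N p (n - 1) k = (1 - p) * (real k - real n) * c"
  proof (cases n)
    case (Suc m)
    have "real n * p * (real N - real n + 1) * kraw_coeff N p (n - 1) k = (real k - real n) * c"
      using kraw_coeff_lowering[of n k N p] kn Suc unfolding c_def by (simp add: algebra_simps)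
    then show ?thesis
      unfolding beta_def by (metis mult.commute mult.left_commute mult.assoc)
  qed (use kn c_def in \<open>simp add: beta_def\<close>)
  have prev: "(real n - real k + 1) * (if k = 0 then 0 else kraw_coeff N p n (k - 1))
      = - c * p * real k * (real N - real k + 1)"
  proof (cases k)
    case (Suc i)
    then show ?thesis
      using kraw_coeff_shift[of N p n i] unfolding c_def by (simp add: algebra_simps)
  qed simp
  define t where "t = real n - real k + 1"
  have t: "t \<noteq> 0" using kn unfolding t_def by simp
  have scalar: "- p * real k * (real N - real k + 1) + real k * t
      = - real (Suc n) * p * (real N - real n) + (alpha N p n + (1 - p) * (real k - real n)) * t"
    unfolding t_def alpha_def by (simp add: algebra_simps)
  have "t * ((if k = 0 then 0 else kraw_coeff N p n (k - 1)) + real k * c)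
      = c * (- p * real k * (real N - real k + 1) + real k * t)"
    using prev unfolding t_def by (simp add: algebra_simps)
  also have "\<dots> = t * (kraw_coeff N p (Suc n) k + alpha N p n * c + beta N p n * kraw_coeff N p (n - 1) k)"
    unfolding scalar down using up unfolding t_def by (simp add: algebra_simps)
  finally show ?thesis
    using t unfolding c_def by simp
qed (simp add: kraw_coeff_eq_0)

lemma Kr_backward_diff:
  assumes "1 \<le> n" "n \<le> N" "p \<noteq> 0"
  shows "x * bnabla (Kr N p n) x
    = real n * Kr N p n x + real n * p * (real N - real n + 1) * Kr N p (n - 1) x"
proof -
  have "x * bnabla (Kr N p n) x = (\<Sum>k=0..n. kraw_coeff N p n k * (x * (ffact x k - ffact (x - 1) k)))"
    unfolding bnabla_def Kr_eq_ffact_sum[OF assms(2,3)]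
    by (simp add: sum_distrib_left sum_subtractf algebra_simps)
  also have "\<dots> = (\<Sum>k=0..n. (real k * kraw_coeff N p n k) * ffact x k)"
    by (simp only: ffact_backward_diff mult.commute mult.left_commute)
  also have "\<dots> = (\<Sum>k=0..n. (real n * kraw_coeff N p n k
      + real n * p * (real N - real n + 1) * kraw_coeff N p (n - 1) k) * ffact x k)"
    using assms by (intro sum.cong refl) (simp add: kraw_coeff_lowering)
  also have "\<dots> = real n * Kr N p n x + real n * p * (real N - real n + 1) * Kr N p (n - 1) x"
  proof -
    have e: "Kr N p (n - 1) x = (\<Sum>k=0..n. kraw_coeff N p (n - 1) k * ffact x k)"
      by (rule Kr_eq_ffact_sum_upto) (use assms in auto)
    show ?thesis
      unfolding e Kr_eq_ffact_sum[OF assms(2,3)] sum_distrib_left sum.distrib[symmetric]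
      by (rule sum.cong[OF refl]) (simp add: algebra_simps)
  qed
  finally show ?thesis .
qed

lemma Kr_recurrence:
  assumes "Suc n \<le> N" "p \<noteq> 0"
  shows "x * Kr N p n x = Kr N p (Suc n) x + alpha N p n * Kr N p n x + beta N p n * Kr N p (n - 1) x"
proof -
  have "x * Kr N p n x = (\<Sum>k=0..n. kraw_coeff N p n k * ffact x (Suc k))
      + (\<Sum>k=0..n. real k * kraw_coeff N p n k * ffact x k)"
    using assms
    by (simp add: Kr_eq_ffact_sum sum_distrib_left ffact_Suc sum.distrib[symmetric] algebra_simps)
  also have "\<dots> = (\<Sum>k=0..Suc n. ((if k = 0 then 0 else kraw_coeff N p n (k - 1))
      + real k * kraw_coeff N p n k) * ffact x k)"
  proof -
    have "(\<Sum>k=0..n. kraw_coeff N p n k * ffact x (Suc k))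
        = (\<Sum>k=0..Suc n. (if k = 0 then 0 else kraw_coeff N p n (k - 1)) * ffact x k)"
      by (subst sum.atLeast0_atMost_Suc_shift) simp
    moreover have "(\<Sum>k=0..n. real k * kraw_coeff N p n k * ffact x k)
        = (\<Sum>k=0..Suc n. real k * kraw_coeff N p n k * ffact x k)"
      by (simp add: kraw_coeff_eq_0)
    ultimately show ?thesis
      by (simp add: sum.distrib algebra_simps)
  qed
  also have "\<dots> = (\<Sum>k=0..Suc n. (kraw_coeff N p (Suc n) k + alpha N p n * kraw_coeff N p n k
      + beta N p n * kraw_coeff N p (n - 1) k) * ffact x k)"
    by (intro sum.cong refl) (simp add: kraw_coeff_recurrence)
  also have "\<dots> = Kr N p (Suc n) x + alpha N p n * Kr N p n x + beta N p n * Kr N p (n - 1) x"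
  proof -
    have e: "Kr N p n x = (\<Sum>k=0..Suc n. kraw_coeff N p n k * ffact x k)"
      "Kr N p (n - 1) x = (\<Sum>k=0..Suc n. kraw_coeff N p (n - 1) k * ffact x k)"
      by (rule Kr_eq_ffact_sum_upto; use assms in simp)+
    show ?thesis
      unfolding e Kr_eq_ffact_sum[OF assms] sum_distrib_left sum.distrib[symmetric]
      by (simp add: algebra_simps)
  qed
  finally show ?thesis .
qed

section \<open>Difference equation and orthogonality\<close>

definition kraw_op :: "nat \<Rightarrow> real \<Rightarrow> (real \<Rightarrow> real) \<Rightarrow> real \<Rightarrow> real" where
  "kraw_op N p f x = p * (real N - x) * fdelta f x - (1 - p) * x * bnabla f x"

lemma kraw_op_ffact:
  "kraw_op N p (\<lambda>y. ffact y k) x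
    = (if k = 0 then 0 else p * real k * (real N - real (k - 1)) * ffact x (k - 1)) - real k * ffact x k"
proof (cases k)
  case (Suc i)
  define F where "F = ffact x i"
  have up: "ffact (x + 1) (Suc i) = (x + 1) * F"
    using ffact_Suc_left[of "x + 1" i] unfolding F_def by simp
  have here: "ffact x (Suc i) = F * (x - real i)"
    unfolding F_def by (rule ffact_Suc)
  have down: "x * (ffact x (Suc i) - ffact (x - 1) (Suc i)) = real (Suc i) * (F * (x - real i))"
    using ffact_backward_diff[of x "Suc i"] unfolding here .
  have "kraw_op N p (\<lambda>y. ffact y k) x
      = p * (real N - x) * ((x + 1) * F - F * (x - real i)) - (1 - p) * (real (Suc i) * (F * (x - real i)))"
    unfolding kraw_op_def fdelta_def bnabla_def Suc up here[symmetric] mult.assoc[of "(1 - p)"] down ..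
  then show ?thesis
    using Suc by (simp add: here F_def algebra_simps)
qed (simp add: kraw_op_def fdelta_def bnabla_def)

lemma kraw_op_sum:
  "kraw_op N p (\<lambda>y. \<Sum>k\<in>A. c k * f k y) x = (\<Sum>k\<in>A. c k * kraw_op N p (f k) x)"
  unfolding kraw_op_def fdelta_def bnabla_def
  by (simp add: sum_subtractf[symmetric] sum_distrib_left algebra_simps)

lemma Kr_eigen:
  assumes "n \<le> N" "p \<noteq> 0"
  shows "kraw_op N p (Kr N p n) x = - real n * Kr N p n x"
proof -
  have "Kr N p n = (\<lambda>y. \<Sum>k=0..Suc n. kraw_coeff N p n k * ffact y k)"
    by (rule ext) (rule Kr_eq_ffact_sum_upto[OF assms], simp)
  then have "kraw_op N p (Kr N p n) x
      = (\<Sum>k=0..Suc n. kraw_coeff N p n k * kraw_op N p (\<lambda>y. ffact y k) x)"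
    by (simp only: kraw_op_sum)
  also have "\<dots> = (\<Sum>k=0..Suc n. kraw_coeff N p n k * (if k = 0 then 0
          else p * real k * (real N - real (k - 1)) * ffact x (k - 1)))
        - (\<Sum>k=0..Suc n. real k * kraw_coeff N p n k * ffact x k)"
    by (simp add: kraw_op_ffact sum_subtractf algebra_simps)
  also have "(\<Sum>k=0..Suc n. kraw_coeff N p n k * (if k = 0 then 0
          else p * real k * (real N - real (k - 1)) * ffact x (k - 1)))
      = (\<Sum>i=0..n. kraw_coeff N p n (Suc i) * p * real (Suc i) * (real N - real i) * ffact x i)"
    by (subst sum.atLeast0_atMost_Suc_shift) (simp add: algebra_simps)
  also have "\<dots> = (\<Sum>i=0..n. - (real n - real i) * kraw_coeff N p n i * ffact x i)"
    by (rule sum.cong[OF refl]) (simp only: kraw_coeff_shift)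
  also have "(\<Sum>k=0..Suc n. real k * kraw_coeff N p n k * ffact x k)
      = (\<Sum>k=0..n. real k * kraw_coeff N p n k * ffact x k)"
    by (simp add: kraw_coeff_eq_0)
  finally show ?thesis
    unfolding Kr_eq_ffact_sum[OF assms]
    by (simp add: sum_distrib_left sum_subtractf[symmetric] algebra_simps)
qed

definition binom_inner :: "nat \<Rightarrow> real \<Rightarrow> (real \<Rightarrow> real) \<Rightarrow> (real \<Rightarrow> real) \<Rightarrow> real" where
  "binom_inner N p f g = (\<Sum>x=0..N. f (real x) * g (real x) * wt N p x)"

lemma binom_inner_commute: "binom_inner N p f g = binom_inner N p g f"
  unfolding binom_inner_def by (simp add: ac_simps)

lemma binom_inner_sum_left:
  "binom_inner N p (\<lambda>x. \<Sum>k\<in>A. c k * f k x) g = (\<Sum>k\<in>A. c k * binom_inner N p (f k) g)"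
  unfolding binom_inner_def
  by (simp add: sum_distrib_left sum_distrib_right mult.assoc sum.swap[of _ A])

lemma binom_inner_diff_left:
  "binom_inner N p (\<lambda>x. f x - g x) h = binom_inner N p f h - binom_inner N p g h"
  unfolding binom_inner_def by (simp add: sum_subtractf algebra_simps)

lemma binom_inner_cmult_left:
  "binom_inner N p (\<lambda>x. c * f x) g = c * binom_inner N p f g"
  unfolding binom_inner_def by (simp add: sum_distrib_left ac_simps)

lemma binom_inner_lin3_left:
  "binom_inner N p (\<lambda>x. f x + a * g x + b * h x) e
    = binom_inner N p f e + a * binom_inner N p g e + b * binom_inner N p h e"
  unfolding binom_inner_def by (simp add: sum.distrib sum_distrib_left algebra_simps)

lemma wt_pos: "0 < p \<Longrightarrow> p < 1 \<Longrightarrow> x \<le> N \<Longrightarrow> 0 < wt N p x"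
  unfolding wt_def by simp

lemma wt_Suc:
  assumes "x < N"
  shows "(1 - p) * real (Suc x) * wt N p (Suc x) = p * (real N - real x) * wt N p x"
proof -
  obtain d where d: "N - x = Suc d" "N - Suc x = d"
    using assms by (metis Suc_diff_Suc)
  have absorb: "real (Suc x) * real (N choose Suc x) = real (N - x) * real (N choose x)"
    using binomial_absorption[of x N] binomial_absorb_comp[of N x] by (metis of_nat_mult)
  have "(1 - p) * real (Suc x) * wt N p (Suc x)
      = p ^ Suc x * (1 - p) ^ Suc d * (real (Suc x) * real (N choose Suc x))"
    unfolding wt_def d by (simp add: algebra_simps)
  also have "\<dots> = p ^ Suc x * (1 - p) ^ Suc d * (real (N - x) * real (N choose x))"
    by (simp only: absorb)
  also have "\<dots> = p * (real N - real x) * wt N p x"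
  proof -
    have "real N = real x + real d + 1" using d assms by linarith
    then show ?thesis
      unfolding wt_def d using assms by (simp add: of_nat_diff algebra_simps)
  qed
  finally show ?thesis .
qed

lemma binom_inner_kraw_op:
  assumes "N = Suc M"
  shows "binom_inner N p (kraw_op N p f) g = - (\<Sum>x=0..M. p * (real N - real x) * wt N p x
      * (f (real x + 1) - f (real x)) * (g (real x + 1) - g (real x)))"
proof -
  define a where "a x = p * (real N - real x) * wt N p x" for x
  have "binom_inner N p (kraw_op N p f) g
      = (\<Sum>x=0..N. a x * (f (real x + 1) - f (real x)) * g (real x))
      - (\<Sum>x=0..N. (1 - p) * real x * wt N p x * (f (real x) - f (real x - 1)) * g (real x))"
    unfolding binom_inner_def sum_subtractf[symmetric]
    by (rule sum.cong[OF refl]) (simp add: kraw_op_def fdelta_def bnabla_def a_def algebra_simps)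
  also have "(\<Sum>x=0..N. a x * (f (real x + 1) - f (real x)) * g (real x))
      = (\<Sum>x=0..M. a x * (f (real x + 1) - f (real x)) * g (real x))"
    using assms by (simp add: a_def)
  also have "(\<Sum>x=0..N. (1 - p) * real x * wt N p x * (f (real x) - f (real x - 1)) * g (real x))
      = (\<Sum>x=0..M. a x * (f (real x + 1) - f (real x)) * g (real x + 1))"
    unfolding assms sum.atLeast0_atMost_Suc_shift
    using wt_Suc[of _ N p] assms by (simp add: a_def add.commute)
  finally show ?thesis
    unfolding a_def by (simp add: sum_subtractf[symmetric] sum_negf[symmetric] algebra_simps)
qed

(* K_n and K_l are eigenfunctions, with eigenvalues -n and -l, of kraw_op, which is symmetric
   for binom_inner. *)
lemma Kr_orthogonal:
  assumes "n \<le> N" "l \<le> N" "n \<noteq> l" "p \<noteq> 0" "1 \<le> N"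
  shows "binom_inner N p (Kr N p n) (Kr N p l) = 0"
proof -
  obtain M where M: "N = Suc M" using assms(5) by (cases N) auto
  have "binom_inner N p (kraw_op N p (Kr N p n)) (Kr N p l)
      = binom_inner N p (kraw_op N p (Kr N p l)) (Kr N p n)"
    unfolding binom_inner_kraw_op[OF M] by (simp add: algebra_simps)
  then have "real n * binom_inner N p (Kr N p n) (Kr N p l) = real l * binom_inner N p (Kr N p n) (Kr N p l)"
    unfolding binom_inner_def Kr_eigen[OF assms(1,4)] Kr_eigen[OF assms(2,4)]
    by (simp add: sum_distrib_left sum_negf ac_simps)
  then show ?thesis using assms(3) by simp
qed

section \<open>Expansion of polynomials in Kravchuk polynomials\<close>

fun ffact_poly :: "nat \<Rightarrow> real poly" where
  "ffact_poly 0 = 1"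
| "ffact_poly (Suc k) = ffact_poly k * [:- real k, 1:]"

lemma poly_ffact_poly: "poly (ffact_poly k) x = ffact x k"
  by (induction k) (simp_all add: ffact_Suc algebra_simps)

lemma lead_coeff_ffact_poly: "lead_coeff (ffact_poly k) = 1"
proof (induction k)
  case (Suc k)
  then show ?case
    by (simp only: ffact_poly.simps lead_coeff_mult) simp
qed simp

lemma degree_ffact_poly: "degree (ffact_poly k) = k"
proof (induction k)
  case (Suc k)
  have "ffact_poly k \<noteq> 0"
    using lead_coeff_ffact_poly[of k] by auto
  then show ?case
    using Suc by (simp only: ffact_poly.simps) (subst degree_mult_eq; simp)
qed simp

definition kraw_poly :: "nat \<Rightarrow> real \<Rightarrow> nat \<Rightarrow> real poly" where
  "kraw_poly N p n = (\<Sum>k=0..n. smult (kraw_coeff N p n k) (ffact_poly k))"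

lemma poly_kraw_poly: "n \<le> N \<Longrightarrow> p \<noteq> 0 \<Longrightarrow> poly (kraw_poly N p n) x = Kr N p n x"
  unfolding kraw_poly_def by (simp add: poly_sum poly_ffact_poly Kr_eq_ffact_sum)

lemma degree_kraw_poly: "degree (kraw_poly N p n) = n"
  and lead_coeff_kraw_poly: "lead_coeff (kraw_poly N p n) = 1"
proof (atomize (full), cases n)
  case (Suc m)
  define R where "R = (\<Sum>k=0..m. smult (kraw_coeff N p n k) (ffact_poly k))"
  have split: "kraw_poly N p n = ffact_poly n + R"
    unfolding kraw_poly_def R_def Suc by (simp add: add.commute)
  have "degree R \<le> m"
    unfolding R_def
    by (rule degree_sum_le) (auto intro: order.trans[OF degree_smult_le] simp: degree_ffact_poly)
  moreover have "coeff (ffact_poly n) n = 1"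
    using lead_coeff_ffact_poly[of n] unfolding degree_ffact_poly .
  ultimately have "degree R < degree (ffact_poly n)" "coeff R n = 0" "coeff (ffact_poly n) n = 1"
    using Suc by (simp_all del: ffact_poly.simps add: degree_ffact_poly coeff_eq_0)
  then show "degree (kraw_poly N p n) = n \<and> lead_coeff (kraw_poly N p n) = 1"
    unfolding split
    by (simp del: ffact_poly.simps add: degree_add_eq_left degree_ffact_poly lead_coeff_ffact_poly)
qed (simp add: kraw_poly_def)

lemma degree_kraw_poly_add: "degree R < n \<Longrightarrow> degree (kraw_poly N p n + R) = n"
  and lead_coeff_kraw_poly_add: "degree R < n \<Longrightarrow> lead_coeff (kraw_poly N p n + R) = 1"
  using lead_coeff_kraw_poly[of N p n, unfolded degree_kraw_poly]
  by (simp_all add: degree_add_eq_left degree_kraw_poly coeff_eq_0)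

lemma poly_eq_0_if_roots_upto:
  fixes P :: "real poly"
  assumes "degree P \<le> N" "\<And>x. x \<le> N \<Longrightarrow> poly P (real x) = 0"
  shows "P = 0"
proof (rule ccontr)
  assume "P \<noteq> 0"
  have "real ` {0..N} \<subseteq> {x. poly P x = 0}"
    using assms(2) by auto
  then have "card (real ` {0..N}) \<le> degree P"
    using card_mono[OF poly_roots_finite[OF \<open>P \<noteq> 0\<close>]] card_poly_roots_bound[OF \<open>P \<noteq> 0\<close>]
    by (meson le_trans)
  then show False
    using assms(1) by (simp add: card_image)
qed

lemma knorm_eq_binom_inner: "knorm N p k = binom_inner N p (Kr N p k) (Kr N p k)"
  unfolding knorm_def binom_inner_def by (simp add: power2_eq_square)

lemma knorm_pos:
  assumes "0 < p" "p < 1" "k \<le> N"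
  shows "0 < knorm N p k"
proof -
  have nonneg: "\<forall>x\<in>{0..N}. 0 \<le> (Kr N p k (real x))\<^sup>2 * wt N p x"
    using wt_pos[OF assms(1,2)] by (simp add: less_imp_le)
  have "knorm N p k \<noteq> 0"
  proof
    assume "knorm N p k = 0"
    then have "\<forall>x\<in>{0..N}. (Kr N p k (real x))\<^sup>2 * wt N p x = 0"
      using nonneg sum_nonneg_eq_0_iff[of "{0..N}" "\<lambda>x. (Kr N p k (real x))\<^sup>2 * wt N p x"]
      unfolding knorm_def by simp
    then have "poly (kraw_poly N p k) (real x) = 0" if "x \<le> N" for x
      using that wt_pos[OF assms(1,2) that] assms by (auto simp: poly_kraw_poly)
    then have "kraw_poly N p k = 0"
      using assms(3) by (intro poly_eq_0_if_roots_upto[of _ N]) (auto simp: degree_kraw_poly)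
    then show False
      using lead_coeff_kraw_poly[of N p k] by simp
  qed
  moreover have "0 \<le> knorm N p k"
    using nonneg unfolding knorm_def by (intro sum_nonneg) auto
  ultimately show ?thesis by simp
qed

lemma poly_eq_Kr_sum:
  assumes "degree q \<le> d" "d \<le> N" "p \<noteq> 0"
  shows "\<exists>c. poly q = (\<lambda>x. \<Sum>k=0..d. c k * Kr N p k x)"
  using assms
proof (induction d arbitrary: q)
  case 0
  then have "q = [:coeff q 0:]"
    by (metis degree_0_id le_0_eq)
  then have "poly q x = coeff q 0" for x
    by (metis poly_pCons poly_0 mult_zero_right add.right_neutral)
  then have "poly q = (\<lambda>x. \<Sum>k=0..0. coeff q 0 * Kr N p k x)"
    by auto
  then show ?case
    by (rule exI[of _ "\<lambda>_. coeff q 0"])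
next
  case (Suc d)
  define r where "r = q - smult (coeff q (Suc d)) (kraw_poly N p (Suc d))"
  have "degree r \<le> d"
  proof (rule degree_le, intro allI impI)
    fix i assume "d < i"
    then consider "i = Suc d" | "Suc d < i" by linarith
    then show "coeff r i = 0"
      using Suc.prems(1) degree_kraw_poly[of N p "Suc d"] lead_coeff_kraw_poly[of N p "Suc d"]
      by cases (auto simp: r_def coeff_eq_0)
  qed
  then obtain c where c: "poly r = (\<lambda>x. \<Sum>k=0..d. c k * Kr N p k x)"
    using Suc by auto
  have "poly q = (\<lambda>x. \<Sum>k=0..Suc d. (c(Suc d := coeff q (Suc d))) k * Kr N p k x)"
  proof
    fix x
    have "poly q x = poly r x + coeff q (Suc d) * Kr N p (Suc d) x"
      unfolding r_def using Suc.prems by (simp add: poly_kraw_poly)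
    then show "poly q x = (\<Sum>k=0..Suc d. (c(Suc d := coeff q (Suc d))) k * Kr N p k x)"
      unfolding c by simp
  qed
  then show ?case by blast
qed

lemma poly_eq_Kr_Fourier_sum:
  assumes "degree q \<le> d" "d \<le> N" "0 < p" "p < 1" "1 \<le> N"
  shows "poly q x = (\<Sum>k=0..d. binom_inner N p (poly q) (Kr N p k) / knorm N p k * Kr N p k x)"
proof -
  obtain c where c: "poly q = (\<lambda>x. \<Sum>k=0..d. c k * Kr N p k x)"
    using poly_eq_Kr_sum[of q d N p] assms by auto
  have "binom_inner N p (poly q) (Kr N p l) = c l * knorm N p l" if "l \<le> d" for l
  proof -
    have "binom_inner N p (poly q) (Kr N p l) = (\<Sum>k=0..d. c k * binom_inner N p (Kr N p k) (Kr N p l))"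
      unfolding c by (rule binom_inner_sum_left)
    also have "\<dots> = (\<Sum>k=0..d. if k = l then c l * knorm N p l else 0)"
      using assms that by (intro sum.cong refl) (auto simp: Kr_orthogonal knorm_eq_binom_inner)
    finally show ?thesis
      using that by simp
  qed
  moreover have "knorm N p l \<noteq> 0" if "l \<le> d" for l
    using knorm_pos[of p l N] assms that by simp
  ultimately show ?thesis
    unfolding c by (intro sum.cong refl) auto
qed

lemma binom_inner_Kr_lower_degree:
  assumes "degree q < m" "m \<le> N" "0 < p" "p < 1" "1 \<le> N"
  shows "binom_inner N p (Kr N p m) (poly q) = 0"
proof -
  have "degree q \<le> m - 1" "m - 1 \<le> N" "p \<noteq> 0"
    using assms by auto
  then obtain c where c: "poly q = (\<lambda>x. \<Sum>k=0..m-1. c k * Kr N p k x)"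
    using poly_eq_Kr_sum by blast
  have "binom_inner N p (Kr N p m) (poly q) = (\<Sum>k=0..m-1. c k * binom_inner N p (Kr N p k) (Kr N p m))"
    unfolding binom_inner_commute[of N p "Kr N p m"] c by (rule binom_inner_sum_left)
  also have "\<dots> = 0"
    using assms by (intro sum.neutral) (auto simp: Kr_orthogonal)
  finally show ?thesis .
qed

section \<open>Norms and the Christoffel-Darboux formula\<close>

lemma beta_nonzero: "1 \<le> k \<Longrightarrow> k \<le> N \<Longrightarrow> 0 < p \<Longrightarrow> p < 1 \<Longrightarrow> beta N p k \<noteq> 0"
  unfolding beta_def by auto

lemma knorm_recurrence:
  assumes "1 \<le> k" "Suc k \<le> N" "0 < p" "p < 1"
  shows "knorm N p k = beta N p k * knorm N p (k - 1)"
proof -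
  have basic: "p \<noteq> 0" "1 \<le> N" "k - 1 \<le> N"
    using assms by auto
  have rec_k: "(\<lambda>x. x * Kr N p k x)
      = (\<lambda>x. Kr N p (Suc k) x + alpha N p k * Kr N p k x + beta N p k * Kr N p (k - 1) x)"
    using Kr_recurrence[OF assms(2) basic(1)] by auto
  have rec_pred: "(\<lambda>x. x * Kr N p (k - 1) x)
      = (\<lambda>x. Kr N p k x + alpha N p (k - 1) * Kr N p (k - 1) x + beta N p (k - 1) * Kr N p (k - 1 - 1) x)"
    using Kr_recurrence[of "k - 1" N p] assms basic by auto
  have "beta N p (k - 1) * binom_inner N p (Kr N p (k - 1 - 1)) (Kr N p k) = 0"
    using assms basic by (cases "k = 1") (simp_all add: beta_def Kr_orthogonal)
  then have "knorm N p k = binom_inner N p (\<lambda>x. x * Kr N p (k - 1) x) (Kr N p k)"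
    unfolding rec_pred binom_inner_lin3_left knorm_eq_binom_inner using assms basic
    by (simp add: Kr_orthogonal)
  also have "\<dots> = binom_inner N p (\<lambda>x. x * Kr N p k x) (Kr N p (k - 1))"
    unfolding binom_inner_def by (simp add: ac_simps)
  also have "\<dots> = beta N p k * knorm N p (k - 1)"
    unfolding rec_k binom_inner_lin3_left knorm_eq_binom_inner using assms basic
    by (simp add: Kr_orthogonal)
  finally show ?thesis .
qed

lemma Christoffel_Darboux:
  assumes "Suc d \<le> N" "0 < p" "p < 1"
  shows "(x - y) * (\<Sum>k=0..d. Kr N p k x * Kr N p k y / knorm N p k)
    = (Kr N p (Suc d) x * Kr N p d y - Kr N p d x * Kr N p (Suc d) y) / knorm N p d"
  using assms(1)
proof (induction d)
  case 0
  have "Kr N p 1 z = z - alpha N p 0" for z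
    using Kr_recurrence[of 0 N p z] 0 assms(2) by (simp add: beta_def)
  then show ?case by simp
next
  case (Suc d)
  define a0 a1 a2 where "a0 = Kr N p d x" "a1 = Kr N p (Suc d) x" "a2 = Kr N p (Suc (Suc d)) x"
  define b0 b1 b2 where "b0 = Kr N p d y" "b1 = Kr N p (Suc d) y" "b2 = Kr N p (Suc (Suc d)) y"
  define A B h where "A = alpha N p (Suc d)" "B = beta N p (Suc d)" "h = knorm N p d"
  have "B \<noteq> 0" "h \<noteq> 0"
    using beta_nonzero[of "Suc d" N p] knorm_pos[of p d N] Suc.prems assms
    unfolding A_B_h_def by auto
  have rec: "x * a1 = a2 + A * a1 + B * a0" "y * b1 = b2 + A * b1 + B * b0"
    using Kr_recurrence[OF Suc.prems] assms unfolding a0_a1_a2_def b0_b1_b2_def A_B_h_def by auto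
  have "(x - y) * (a1 * b1) = (x * a1) * b1 - a1 * (y * b1)"
    by (simp add: algebra_simps)
  also have "\<dots> = (a2 + A * a1 + B * a0) * b1 - a1 * (b2 + A * b1 + B * b0)"
    unfolding rec ..
  finally have key: "(x - y) * (a1 * b1) = (a2 * b1 - a1 * b2) + B * (a0 * b1 - a1 * b0)"
    by (simp add: algebra_simps)
  have norm: "knorm N p (Suc d) = B * h"
    using knorm_recurrence[of "Suc d" N p] Suc.prems assms unfolding A_B_h_def by simp
  then have "(x - y) * (\<Sum>k=0..Suc d. Kr N p k x * Kr N p k y / knorm N p k)
      = (a1 * b0 - a0 * b1) / h + (x - y) * (a1 * b1) / (B * h)"
    using Suc unfolding a0_a1_a2_def b0_b1_b2_def A_B_h_def by (simp add: distrib_left)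
  also have "\<dots> = (a2 * b1 - a1 * b2) / (B * h)"
    unfolding key using \<open>B \<noteq> 0\<close> \<open>h \<noteq> 0\<close> by (simp add: field_simps)
  finally show ?case
    unfolding norm a0_a1_a2_def b0_b1_b2_def .
qed

section \<open>Finite differences of the Christoffel-Darboux kernel\<close>

lemma fdiff_sum: "fdiff j (\<lambda>x. \<Sum>k\<in>A. c k * f k x) y = (\<Sum>k\<in>A. c k * fdiff j (f k) y)"
  by (induction j arbitrary: y) (simp_all add: fdelta_def sum_subtractf right_diff_distrib)

lemma fdiff_diff: "fdiff j (\<lambda>x. f x - g x) y = fdiff j f y - fdiff j g y"
  by (induction j arbitrary: y) (simp_all add: fdelta_def)

lemma fdiff_cmult: "fdiff j (\<lambda>t. c * f t) y = c * fdiff j f y"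
  by (induction j arbitrary: y) (simp_all add: fdelta_def algebra_simps)

lemma fdiff_cong:
  "(\<And>i. i \<le> j \<Longrightarrow> f (y + real i) = g (y + real i)) \<Longrightarrow> fdiff j f y = fdiff j g y"
proof (induction j arbitrary: y)
  case (Suc j)
  have "fdiff j f y = fdiff j g y"
    using Suc.prems by (intro Suc.IH) auto
  moreover have "fdiff j f (y + 1) = fdiff j g (y + 1)"
  proof (rule Suc.IH)
    fix i assume "i \<le> j"
    then show "f (y + 1 + real i) = g (y + 1 + real i)"
      using Suc.prems[of "Suc i"] by (simp add: add.assoc)
  qed
  ultimately show ?case by (simp add: fdelta_def)
qed (metis add_0_right fdiff.simps(1) le_refl of_nat_0)

(* Coefficients of the discrete quotient rule for t |-> g t / (x - t); they vanish for k > j so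
   that sums over {0..j} may be extended. *)
definition diff_quot_coeff :: "nat \<Rightarrow> nat \<Rightarrow> real \<Rightarrow> real" where
  "diff_quot_coeff j k u = (if k \<le> j then fact j / fact k * ffact u k / ffact u (Suc j) else 0)"

lemma diff_quot_coeff_minus_one:
  assumes "u \<noteq> 0" "k \<le> j"
  shows "diff_quot_coeff j k (u - 1) = fact j / fact k * ffact u (Suc k) / ffact u (Suc (Suc j))"
  using assms by (simp add: diff_quot_coeff_def ffact_Suc_left)

lemma diff_quot_coeff_pred_minus_one:
  assumes "u \<noteq> 0" "0 < k" "k \<le> Suc j"
  shows "diff_quot_coeff j (k - 1) (u - 1) = real k * (fact j / fact k) * ffact u k / ffact u (Suc (Suc j))"
proof -
  obtain i where k: "k = Suc i"
    using assms(2) by (cases k) auto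
  then have "fact k = real k * fact i" "real k \<noteq> 0"
    by (simp_all del: of_nat_Suc)
  then have "fact j / fact i = real k * (fact j / fact k)"
    by simp
  then show ?thesis
    using diff_quot_coeff_minus_one[OF assms(1), of i j] assms(3) k by simp
qed

lemma diff_quot_coeff_step:
  assumes "k \<le> Suc j" "ffact u (Suc (Suc j)) \<noteq> 0"
  shows "diff_quot_coeff j k (u - 1) + (if k = 0 then 0 else diff_quot_coeff j (k - 1) (u - 1))
      - diff_quot_coeff j k u = diff_quot_coeff (Suc j) k u"
proof -
  define F2 where "F2 = ffact u (Suc (Suc j))"
  define A :: real where "A = fact j / fact k"
  define G where "G = ffact u k"
  have u: "u \<noteq> 0"
    using assms(2) unfolding ffact_Suc_left[of u "Suc j"] by auto
  have d: "u - real (Suc j) \<noteq> 0"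
    using assms(2) unfolding ffact_Suc[of u "Suc j"] by auto
  have prev: "(if k = 0 then 0 else diff_quot_coeff j (k - 1) (u - 1)) = real k * A * G / F2"
    using diff_quot_coeff_pred_minus_one[OF u _ assms(1)] unfolding A_def G_def F2_def by simp
  have succ: "diff_quot_coeff (Suc j) k u = real (Suc j) * A * G / F2"
    using assms(1) unfolding diff_quot_coeff_def A_def G_def F2_def by simp
  show ?thesis
  proof (cases "k = Suc j")
    case True
    then show ?thesis
      unfolding prev succ by (simp add: diff_quot_coeff_def)
  next
    case False
    then have kj: "k \<le> j" using assms(1) by simp
    have "ffact u (Suc j) = F2 / (u - real (Suc j))"
      using d unfolding F2_def by (simp add: ffact_Suc[of u "Suc j"])
    then have here: "diff_quot_coeff j k u = A * G * (u - real (Suc j)) / F2"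
      using kj d unfolding diff_quot_coeff_def A_def G_def by simp
    have "ffact u (Suc k) = G * (u - real k)"
      unfolding G_def by (rule ffact_Suc)
    then have "diff_quot_coeff j k (u - 1) = A * (G * (u - real k)) / F2"
      unfolding diff_quot_coeff_minus_one[OF u kj] A_def F2_def by simp
    then show ?thesis
      unfolding prev here succ
      by (simp add: diff_divide_distrib[symmetric] add_divide_distrib[symmetric] algebra_simps)
  qed
qed

lemma fdiff_divide_linear_coeff:
  assumes "ffact (x - y) (Suc j) \<noteq> 0"
  shows "fdiff j (\<lambda>t. g t / (x - t)) y = (\<Sum>k=0..j. diff_quot_coeff j k (x - y) * fdiff k g y)"
  using assms
proof (induction j arbitrary: y)
  case 0
  then show ?case by (simp add: diff_quot_coeff_def)
next
  case (Suc j)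
  define u where "u = x - y"
  have "ffact u (Suc (Suc j)) = u * ffact (u - 1) (Suc j)"
    "ffact u (Suc (Suc j)) = ffact u (Suc j) * (u - real (Suc j))"
    by (rule ffact_Suc_left, rule ffact_Suc)
  then have "ffact u (Suc j) \<noteq> 0" "ffact (u - 1) (Suc j) \<noteq> 0"
    using Suc.prems unfolding u_def[symmetric] by auto
  then have IH: "fdiff j (\<lambda>t. g t / (x - t)) y = (\<Sum>k=0..j. diff_quot_coeff j k u * fdiff k g y)"
    "fdiff j (\<lambda>t. g t / (x - t)) (y + 1) = (\<Sum>k=0..j. diff_quot_coeff j k (u - 1) * fdiff k g (y + 1))"
    using Suc.IH unfolding u_def by (auto simp: algebra_simps)
  have extend: "(\<Sum>k=0..j. diff_quot_coeff j k v * fdiff k g y)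
      = (\<Sum>k=0..Suc j. diff_quot_coeff j k v * fdiff k g y)" for v
    by (simp add: diff_quot_coeff_def)
  have shift: "(\<Sum>k=0..j. diff_quot_coeff j k (u - 1) * fdiff (Suc k) g y)
      = (\<Sum>k=0..Suc j. (if k = 0 then 0 else diff_quot_coeff j (k - 1) (u - 1)) * fdiff k g y)"
    by (subst sum.atLeast0_atMost_Suc_shift) simp
  have "fdiff (Suc j) (\<lambda>t. g t / (x - t)) y
      = (\<Sum>k=0..j. diff_quot_coeff j k (u - 1) * fdiff k g y)
      + (\<Sum>k=0..j. diff_quot_coeff j k (u - 1) * fdiff (Suc k) g y)
      - (\<Sum>k=0..j. diff_quot_coeff j k u * fdiff k g y)"
    using IH by (simp add: fdelta_def sum.distrib[symmetric] algebra_simps)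
  also have "\<dots> = (\<Sum>k=0..Suc j. (diff_quot_coeff j k (u - 1)
      + (if k = 0 then 0 else diff_quot_coeff j (k - 1) (u - 1)) - diff_quot_coeff j k u) * fdiff k g y)"
    unfolding extend shift sum.distrib[symmetric] sum_subtractf[symmetric]
    by (rule sum.cong) (simp_all add: algebra_simps)
  also have "\<dots> = (\<Sum>k=0..Suc j. diff_quot_coeff (Suc j) k u * fdiff k g y)"
    using Suc.prems unfolding u_def by (intro sum.cong refl) (simp add: diff_quot_coeff_step)
  finally show ?case
    unfolding u_def .
qed

lemma fdiff_divide_linear:
  assumes "ffact (x - y) (Suc j) \<noteq> 0"
  shows "fdiff j (\<lambda>t. g t / (x - t)) y
    = fact j / ffact (x - y) (Suc j) * (\<Sum>k=0..j. fdiff k g y / fact k * ffact (x - y) k)"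
  unfolding fdiff_divide_linear_coeff[OF assms] sum_distrib_left
  by (intro sum.cong refl) (simp add: diff_quot_coeff_def mult.commute mult.left_commute)

lemma Kker_eq_An_Bn:
  assumes "1 \<le> m" "m \<le> N" "0 < p" "p < 1" "ffact (x - y) (Suc j) \<noteq> 0"
  shows "Kker N p 0 j (m - 1) x y = An N p j m x y * Kr N p m x + Bn N p j m x y * Kr N p (m - 1) x"
proof -
  define h where "h = knorm N p (m - 1)"
  have "h \<noteq> 0"
    using knorm_pos[of p "m - 1" N] assms unfolding h_def by fastforce
  have "Kker N p 0 j (m - 1) x y = fdiff j (\<lambda>t. \<Sum>k=0..m-1. Kr N p k x / knorm N p k * Kr N p k t) y"
    unfolding Kker_def fdiff_sum by simp
  also have "\<dots> = fdiff j (\<lambda>t. Kr N p m x / h * (Kr N p (m - 1) t / (x - t))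
      - Kr N p (m - 1) x / h * (Kr N p m t / (x - t))) y"
  proof (rule fdiff_cong)
    fix i assume "i \<le> j"
    define z where "z = y + real i"
    have "x - z \<noteq> 0"
      using assms(5) \<open>i \<le> j\<close> unfolding ffact_def z_def by (auto simp: algebra_simps)
    moreover have "(x - z) * (\<Sum>k=0..m-1. Kr N p k x / knorm N p k * Kr N p k z)
        = (Kr N p m x * Kr N p (m - 1) z - Kr N p (m - 1) x * Kr N p m z) / h"
      using Christoffel_Darboux[of "m - 1" N p x z] assms unfolding h_def by (simp add: ac_simps)
    ultimately have "(\<Sum>k=0..m-1. Kr N p k x / knorm N p k * Kr N p k z)
        = (Kr N p m x * Kr N p (m - 1) z - Kr N p (m - 1) x * Kr N p m z) / h / (x - z)"
      by (subst nonzero_eq_divide_eq) (simp_all add: ac_simps)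
    then show "(\<Sum>k=0..m-1. Kr N p k x / knorm N p k * Kr N p k z)
      = Kr N p m x / h * (Kr N p (m - 1) z / (x - z)) - Kr N p (m - 1) x / h * (Kr N p m z / (x - z))"
      by (simp add: diff_divide_distrib)
  qed
  also have "\<dots> = Kr N p m x / h * fdiff j (\<lambda>t. Kr N p (m - 1) t / (x - t)) y
      - Kr N p (m - 1) x / h * fdiff j (\<lambda>t. Kr N p m t / (x - t)) y"
    unfolding fdiff_diff fdiff_cmult ..
  also have "\<dots> = An N p j m x y * Kr N p m x + Bn N p j m x y * Kr N p (m - 1) x"
    unfolding fdiff_divide_linear[OF assms(5)] An_def Bn_def h_def by (simp add: algebra_simps)
  finally show ?thesis .
qed

definition kernel_poly :: "nat \<Rightarrow> real \<Rightarrow> nat \<Rightarrow> nat \<Rightarrow> real \<Rightarrow> real poly" where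
  "kernel_poly N p j d y = (\<Sum>k=0..d. smult (fdiff j (Kr N p k) y / knorm N p k) (kraw_poly N p k))"

lemma poly_kernel_poly:
  "d \<le> N \<Longrightarrow> p \<noteq> 0 \<Longrightarrow> poly (kernel_poly N p j d y) x = Kker N p 0 j d x y"
  unfolding kernel_poly_def Kker_def by (simp add: poly_sum poly_kraw_poly ac_simps)

lemma degree_kernel_poly: "degree (kernel_poly N p j d y) \<le> d"
  unfolding kernel_poly_def
  by (rule degree_sum_le) (auto intro: order.trans[OF degree_smult_le] simp: degree_kraw_poly)

lemma fdiff_Kker_left: "fdiff j (\<lambda>x. Kker N p 0 j d x y) z = Kker N p j j d z y"
  unfolding Kker_def using fdiff_sum[of j "\<lambda>k. fdiff j (Kr N p k) y / knorm N p k" "\<lambda>k. Kr N p k" "{0..d}" z]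
  by (simp add: ac_simps)

lemma binom_inner_Kker:
  assumes "degree q \<le> d" "d \<le> N" "0 < p" "p < 1" "1 \<le> N"
  shows "binom_inner N p (\<lambda>x. Kker N p 0 j d x y) (poly q) = fdiff j (poly q) y"
proof -
  have "fdiff j (poly q) y
      = (\<Sum>k=0..d. binom_inner N p (poly q) (Kr N p k) / knorm N p k * fdiff j (Kr N p k) y)"
    by (subst poly_eq_Kr_Fourier_sum[OF assms, abs_def]) (rule fdiff_sum)
  moreover have "binom_inner N p (\<lambda>x. Kker N p 0 j d x y) (poly q)
      = (\<Sum>k=0..d. fdiff j (Kr N p k) y / knorm N p k * binom_inner N p (Kr N p k) (poly q))"
    unfolding Kker_def using binom_inner_sum_left[of N p "\<lambda>k. fdiff j (Kr N p k) y / knorm N p k"]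
    by (simp add: ac_simps)
  ultimately show ?thesis
    by (simp add: binom_inner_commute ac_simps)
qed

section \<open>Kravchuk-Sobolev polynomials\<close>

lemma sob_ip_diff_left:
  "sob_ip N p lam mu j (P - P') q = sob_ip N p lam mu j P q - sob_ip N p lam mu j P' q"
proof -
  have e: "poly (P - P') = (\<lambda>x. poly P x - poly P' x)" by auto
  show ?thesis
    unfolding sob_ip_def e fdiff_diff by (simp add: sum_subtractf algebra_simps)
qed

lemma sob_ip_self_eq_0_imp:
  assumes "sob_ip N p lam mu j r r = 0" "degree r \<le> N" "0 < p" "p < 1" "0 \<le> lam" "0 \<le> mu"
  shows "r = 0"
proof (rule poly_eq_0_if_roots_upto[OF assms(2)])
  have nonneg: "\<forall>x\<in>{0..N}. 0 \<le> poly r (real x) * poly r (real x) * wt N p x"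
    using wt_pos[OF assms(3,4)] by (simp add: less_imp_le)
  have "0 \<le> lam * fdiff j (poly r) 0 * fdiff j (poly r) 0"
    "0 \<le> mu * fdiff j (poly r) (real N) * fdiff j (poly r) (real N)"
    "0 \<le> (\<Sum>x=0..N. poly r (real x) * poly r (real x) * wt N p x)"
    using assms(5,6) nonneg by (simp_all add: mult.assoc) (intro sum_nonneg; simp)
  then have "(\<Sum>x=0..N. poly r (real x) * poly r (real x) * wt N p x) = 0"
    using assms(1) unfolding sob_ip_def by linarith
  then have "\<forall>x\<in>{0..N}. poly r (real x) * poly r (real x) * wt N p x = 0"
    using nonneg sum_nonneg_eq_0_iff[of "{0..N}" "\<lambda>x. poly r (real x) * poly r (real x) * wt N p x"]
    by simp
  then show "poly r (real x) = 0" if "x \<le> N" for x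
    using that wt_pos[OF assms(3,4) that] by auto
qed

lemma KS_eqI:
  assumes "degree P = m" "lead_coeff P = 1" "\<And>q. degree q < m \<Longrightarrow> sob_ip N p lam mu j P q = 0"
    and "m \<le> N" "0 < p" "p < 1" "0 \<le> lam" "0 \<le> mu"
  shows "KS N p lam mu j m = P"
  unfolding KS_def
proof (rule the_equality)
  fix P' assume P': "degree P' = m \<and> lead_coeff P' = 1 \<and> (\<forall>q. degree q < m \<longrightarrow> sob_ip N p lam mu j P' q = 0)"
  show "P' = P"
  proof (rule ccontr)
    assume "P' \<noteq> P"
    then have "degree (P' - P) < degree P"
      using P' assms(1,2) by (intro degree_less_if_less_eqI degree_diff_le) auto
    then have "sob_ip N p lam mu j (P' - P) (P' - P) = 0"
      using P' assms(1,3) by (simp add: sob_ip_diff_left)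
    then have "P' - P = 0"
      using \<open>degree (P' - P) < degree P\<close> assms by (intro sob_ip_self_eq_0_imp[of N p lam mu j]) auto
    then show False
      using \<open>P' \<noteq> P\<close> by simp
  qed
qed (use assms in auto)

lemma deltan_pos:
  assumes "0 \<le> lam" "0 \<le> mu" "0 < p" "p < 1" "n - 1 \<le> N"
  shows "0 < deltan N p lam mu j n"
proof -
  define a where "a = Kker N p j j (n - 1) 0 0"
  define b where "b = Kker N p j j (n - 1) 0 (real N)"
  define c where "c = Kker N p j j (n - 1) (real N) (real N)"
  define w where "w k = sqrt (inverse (knorm N p k))" for k
  have w: "w k * w k = inverse (knorm N p k)" if "k \<in> {0..n - 1}" for k
    using knorm_pos[OF assms(3,4)] assms(5) that unfolding w_def by (simp add: less_imp_le)
  have sq: "Kker N p j j (n - 1) y z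
      = (\<Sum>k=0..n-1. (fdiff j (Kr N p k) y * w k) * (fdiff j (Kr N p k) z * w k))" for y z
    unfolding Kker_def using w by (intro sum.cong refl) (simp add: divide_inverse ac_simps)
  have "0 \<le> a" "0 \<le> c"
    unfolding a_def c_def sq by (simp_all add: sum_nonneg)
  moreover have "b\<^sup>2 \<le> a * c"
    unfolding a_def b_def c_def sq power2_eq_square[symmetric] by (rule Cauchy_Schwarz_ineq_sum)
  moreover have "deltan N p lam mu j n = 1 + lam * a + mu * c + lam * mu * (a * c - b\<^sup>2)"
    unfolding deltan_def a_def b_def c_def Kker_def by (simp add: algebra_simps power2_eq_square)
  ultimately show ?thesis
    using assms(1,2) by (smt (verit) mult_nonneg_nonneg)
qed

lemma cramer_rule_2:
  fixes lam mu a b c d u v D X Y :: real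
  assumes "D \<noteq> 0" "D = (1 + lam * a) * (1 + mu * d) - lam * mu * b * c"
    and "X = u * (1 + mu * d) - mu * b * v" "Y = (1 + lam * a) * v - lam * c * u"
  shows "u - lam * (X / D) * a - mu * (Y / D) * b = X / D"
    and "v - lam * (X / D) * c - mu * (Y / D) * d = Y / D"
proof -
  have "u * D - lam * X * a - mu * Y * b = X" "v * D - lam * X * c - mu * Y * d = Y"
    unfolding assms(2-4) by algebra+
  then show "u - lam * (X / D) * a - mu * (Y / D) * b = X / D"
    and "v - lam * (X / D) * c - mu * (Y / D) * d = Y / D"
    using assms(1) by (simp_all add: field_simps)
qed

lemma binom_inner_Kr_minus_Kker:
  assumes "degree q < n" "1 \<le> n" "n \<le> N" "0 < p" "p < 1"
  shows "binom_inner N p (\<lambda>x. Kr N p n x - a * Kker N p 0 j (n - 1) x 0 - b * Kker N p 0 j (n - 1) x (real N))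
      (poly q) = - a * fdiff j (poly q) 0 - b * fdiff j (poly q) (real N)"
proof -
  have "degree q \<le> n - 1" "n - 1 \<le> N" "1 \<le> N"
    using assms by auto
  then show ?thesis
    unfolding binom_inner_diff_left binom_inner_cmult_left
    using binom_inner_Kr_lower_degree[of q n N p] assms by (simp add: binom_inner_Kker)
qed

(* Q = K_n - a Kker(., 0) - b Kker(., N) is orthogonal to lower degrees up to the boundary terms
   of binom_inner_Kr_minus_Kker; Cramer's rule chooses a = lam Phi1, b = mu Phi2 so that
   Delta^j Q(0) = Phi1 and Delta^j Q(N) = Phi2 cancel them in sob_ip. *)
lemma KS_eq_Kr_minus_Kker:
  assumes "1 \<le> n" "n \<le> N" "0 < p" "p < 1" "0 \<le> lam" "0 \<le> mu"
  shows "poly (KS N p lam mu j n) x = Kr N p n x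
    - lam * Phi1 N p lam mu j n * Kker N p 0 j (n - 1) x 0
    - mu * Phi2 N p lam mu j n * Kker N p 0 j (n - 1) x (real N)"
proof -
  define a where "a = lam * Phi1 N p lam mu j n"
  define b where "b = mu * Phi2 N p lam mu j n"
  define R where "R = smult (- a) (kernel_poly N p j (n - 1) 0) + smult (- b) (kernel_poly N p j (n - 1) (real N))"
  define Q where "Q = kraw_poly N p n + R"
  have poly_Q: "poly Q = (\<lambda>x. Kr N p n x - a * Kker N p 0 j (n - 1) x 0 - b * Kker N p 0 j (n - 1) x (real N))"
    using assms unfolding Q_def R_def by (auto simp: poly_kraw_poly poly_kernel_poly)
  have "degree (kernel_poly N p j (n - 1) y) < n" for y
    using assms(1) degree_kernel_poly[of N p j "n - 1" y] by linarith
  then have "degree R < n"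
    unfolding R_def
    by (intro le_less_trans[OF degree_add_le_max] le_less_trans[OF max.mono[OF degree_smult_le degree_smult_le]]) auto
  then have deg: "degree Q = n" and lead: "lead_coeff Q = 1"
    unfolding Q_def by (rule degree_kraw_poly_add, rule lead_coeff_kraw_poly_add)
  have diff_Q: "fdiff j (poly Q) z
      = fdiff j (Kr N p n) z - a * Kker N p j j (n - 1) z 0 - b * Kker N p j j (n - 1) z (real N)" for z
    unfolding poly_Q fdiff_diff fdiff_cmult fdiff_Kker_left ..
  have "deltan N p lam mu j n \<noteq> 0"
    using deltan_pos[of lam mu p n N j] assms by fastforce
  note cramer = cramer_rule_2[where u = "fdiff j (Kr N p n) 0" and v = "fdiff j (Kr N p n) (real N)",
      OF this deltan_def refl refl, folded Phi1_def Phi2_def]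
  have fdiff_Q: "fdiff j (poly Q) 0 = Phi1 N p lam mu j n" "fdiff j (poly Q) (real N) = Phi2 N p lam mu j n"
    unfolding diff_Q a_def b_def using cramer by simp_all
  have "sob_ip N p lam mu j Q q = 0" if "degree q < n" for q
    unfolding sob_ip_def binom_inner_def[symmetric] fdiff_Q unfolding poly_Q
    using binom_inner_Kr_minus_Kker[OF that assms(1-4)] by (simp add: a_def b_def)
  then have "KS N p lam mu j n = Q"
    using KS_eqI[OF deg lead] assms by auto
  then show ?thesis
    by (simp add: poly_Q a_def b_def)
qed

section \<open>Connection formulas and the ladder identities\<close>

lemma ffact_nonzero_off_grid:
  assumes "x \<notin> real ` {..N + j}" "M \<le> N"
  shows "ffact (x - real M) (Suc j) \<noteq> 0"
proof (rule ffact_nonzero)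
  fix i assume "i < Suc j"
  then have "real (M + i) \<in> real ` {..N + j}"
    using assms(2) by (intro imageI) simp
  show "x - real M \<noteq> real i"
  proof
    assume "x - real M = real i"
    then have "x = real (M + i)" by simp
    then show False
      using assms(1) \<open>real (M + i) \<in> _\<close> by simp
  qed
qed

lemma KS_connection:
  assumes "1 \<le> n" "n \<le> N" "0 < p" "p < 1" "0 \<le> lam" "0 \<le> mu" "x \<notin> real ` {..N + j}"
  shows "poly (KS N p lam mu j n) x
    = C1 N p lam mu j n x * Kr N p n x + D1 N p lam mu j n x * Kr N p (n - 1) x"
proof -
  have "ffact (x - 0) (Suc j) \<noteq> 0" "ffact (x - real N) (Suc j) \<noteq> 0"
    using ffact_nonzero_off_grid[OF assms(7)] by (metis of_nat_0 le0, simp)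
  then show ?thesis
    unfolding KS_eq_Kr_minus_Kker[OF assms(1-6)] C1_def D1_def
    using Kker_eq_An_Bn[OF assms(1-4)] by (simp add: algebra_simps)
qed

lemma Kr_pair_shift:
  assumes "2 \<le> n" "n \<le> N" "0 < p" "p < 1" "c = - b / beta N p (n - 1)"
  shows "a * Kr N p (n - 1) x + b * Kr N p (n - 2) x
    = c * Kr N p n x + (a + c * (alpha N p (n - 1) - x)) * Kr N p (n - 1) x"
proof -
  have "Suc (n - 1) = n" "n - 1 - 1 = n - 2"
    using assms(1) by auto
  then have "beta N p (n - 1) * Kr N p (n - 2) x
      = x * Kr N p (n - 1) x - Kr N p n x - alpha N p (n - 1) * Kr N p (n - 1) x"
    using Kr_recurrence[of "n - 1" N p x] assms by simp
  moreover have "beta N p (n - 1) \<noteq> 0"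
    using beta_nonzero[of "n - 1" N p] assms by simp
  ultimately have K2: "Kr N p (n - 2) x
      = (x * Kr N p (n - 1) x - Kr N p n x - alpha N p (n - 1) * Kr N p (n - 1) x) / beta N p (n - 1)"
    by (simp add: eq_divide_eq ac_simps)
  show ?thesis
    unfolding assms(5) K2 using \<open>beta N p (n - 1) \<noteq> 0\<close> by (simp add: field_simps)
qed

(* The coefficients are those of E1 and F1, with C1 and D1 replaced by arbitrary c and d. *)
lemma Kr_pair_backward_diff:
  fixes c d :: "real \<Rightarrow> real"
  assumes "2 \<le> n" "n \<le> N" "0 < p" "p < 1"
  shows "x * bnabla (\<lambda>t. c t * Kr N p n t + d t * Kr N p (n - 1) t) x
    = (x * bnabla c x + real n * c (x - 1)
        - (real n - 1) * p * (real N - real n + 2) * d (x - 1) / beta N p (n - 1)) * Kr N p n x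
      + (x * bnabla d x + real n * p * (real N - real n + 1) * c (x - 1)
        + (real n - 1) * p * (real N - real n + 2) * (x - alpha N p (n - 1)) * d (x - 1) / beta N p (n - 1)
        + (real n - 1) * d (x - 1)) * Kr N p (n - 1) x"
proof -
  define A B where "A = alpha N p (n - 1)" "B = beta N p (n - 1)"
  define K0 K1 where "K0 = Kr N p n x" "K1 = Kr N p (n - 1) x"
  define w where "w = (real n - 1) * p * (real N - real n + 2) * d (x - 1)"
  have "B \<noteq> 0"
    unfolding A_B_def using beta_nonzero[of "n - 1" N p] assms by simp
  have lower0: "x * Kr N p n (x - 1) = x * K0 - real n * K0 - real n * p * (real N - real n + 1) * K1"
    using Kr_backward_diff[of n N p x] assms unfolding bnabla_def K0_K1_def by (simp add: algebra_simps)
  have l1: "x * Kr N p (n - 1) (x - 1)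
      = x * K1 - (real n - 1) * K1 - (real n - 1) * p * (real N - real n + 2) * Kr N p (n - 2) x"
    using Kr_backward_diff[of "n - 1" N p x] assms unfolding bnabla_def K0_K1_def
    by (simp add: of_nat_diff algebra_simps numeral_2_eq_2 Suc_diff_Suc)
  have lower1: "d (x - 1) * (x * Kr N p (n - 1) (x - 1))
      = d (x - 1) * (x * K1 - (real n - 1) * K1) - w * Kr N p (n - 2) x"
    unfolding w_def l1 by (simp add: algebra_simps)
  have "x * bnabla (\<lambda>t. c t * Kr N p n t + d t * Kr N p (n - 1) t) x
      = x * bnabla c x * K0 + c (x - 1) * (x * K0 - x * Kr N p n (x - 1))
        + x * bnabla d x * K1 + (d (x - 1) * (x * K1) - d (x - 1) * (x * Kr N p (n - 1) (x - 1)))"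
    unfolding bnabla_def K0_K1_def by (simp add: algebra_simps)
  also have "\<dots> = x * bnabla c x * K0 + c (x - 1) * (real n * K0 + real n * p * (real N - real n + 1) * K1)
      + x * bnabla d x * K1 + ((real n - 1) * d (x - 1) * K1 + w * Kr N p (n - 2) x)"
    unfolding lower0 lower1 by (simp add: algebra_simps)
  also have "\<dots> = x * bnabla c x * K0 + c (x - 1) * (real n * K0 + real n * p * (real N - real n + 1) * K1)
      + x * bnabla d x * K1 + (- w / B * K0 + ((real n - 1) * d (x - 1) + - w / B * (A - x)) * K1)"
    unfolding K0_K1_def A_B_def using Kr_pair_shift[OF assms refl] by simp
  finally show ?thesis
    unfolding w_def K0_K1_def[symmetric] A_B_def[symmetric] using \<open>B \<noteq> 0\<close> by (simp add: field_simps)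
qed

lemma minus_one_notin_real_atMost:
  assumes "x \<notin> real ` {..Suc M}"
  shows "x - 1 \<notin> real ` {..M}"
proof
  assume "x - 1 \<in> real ` {..M}"
  then obtain i where "i \<le> M" "x = real (Suc i)"
    by (auto simp: algebra_simps)
  moreover from this have "real (Suc i) \<in> real ` {..Suc M}"
    by (intro imageI) simp
  ultimately show False
    using assms by simp
qed

lemma KS_backward_diff:
  assumes "2 \<le> n" "n \<le> N" "0 < p" "p < 1" "0 \<le> lam" "0 \<le> mu" "x \<notin> real ` {..Suc (N + j)}"
  shows "x * bnabla (poly (KS N p lam mu j n)) x
    = E1 N p lam mu j n x * Kr N p n x + F1 N p lam mu j n x * Kr N p (n - 1) x"
proof -
  have "x \<notin> real ` {..N + j}" "x - 1 \<notin> real ` {..N + j}"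
    using assms(7) minus_one_notin_real_atMost[OF assms(7)] by auto
  then have "bnabla (poly (KS N p lam mu j n)) x
      = bnabla (\<lambda>t. C1 N p lam mu j n t * Kr N p n t + D1 N p lam mu j n t * Kr N p (n - 1) t) x"
    unfolding bnabla_def using KS_connection[of n N p lam mu _ j] assms by simp
  then show ?thesis
    unfolding E1_def F1_def using Kr_pair_backward_diff[OF assms(1-4)] by simp
qed

lemma KS_pred_connection:
  assumes "3 \<le> n" "n \<le> N" "0 < p" "p < 1" "0 \<le> lam" "0 \<le> mu" "x \<notin> real ` {..N + j}"
  shows "poly (KS N p lam mu j (n - 1)) x
    = C2 N p lam mu j n x * Kr N p n x + D2 N p lam mu j n x * Kr N p (n - 1) x"
proof -
  have "n - 1 - 1 = n - 2" by simp
  then show ?thesis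
    using KS_connection[of "n - 1" N p lam mu x j] Kr_pair_shift[of n N p "C2 N p lam mu j n x"] assms
    unfolding D2_def C2_def by simp
qed

lemma KS_pred_backward_diff:
  assumes "3 \<le> n" "n \<le> N" "0 < p" "p < 1" "0 \<le> lam" "0 \<le> mu" "x \<notin> real ` {..Suc (N + j)}"
  shows "x * bnabla (poly (KS N p lam mu j (n - 1))) x
    = E2 N p lam mu j n x * Kr N p n x + F2 N p lam mu j n x * Kr N p (n - 1) x"
proof -
  have "n - 1 - 1 = n - 2" by simp
  then show ?thesis
    using KS_backward_diff[of "n - 1" N p lam mu x j] Kr_pair_shift[of n N p "E2 N p lam mu j n x"] assms
    unfolding F2_def E2_def by simp
qed

lemma ladder_identities:
  fixes c1 d1 c2 d2 e1 f1 e2 f2 K L P Q P' Q' x :: real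
  assumes "P = c1 * K + d1 * L" "Q = c2 * K + d2 * L"
    and "x * P' = e1 * K + f1 * L" "x * Q' = e2 * K + f2 * L"
  shows "x * (c1 * d2 - c2 * d1) * P' - (e1 * d2 - f1 * c2) * P = - (e1 * d1 - f1 * c1) * Q"
    and "x * (c1 * d2 - c2 * d1) * Q' + (e2 * d1 - f2 * c1) * Q = (e2 * d2 - f2 * c2) * P"
proof -
  have "x * (c1 * d2 - c2 * d1) * P' = (c1 * d2 - c2 * d1) * (x * P')"
    "x * (c1 * d2 - c2 * d1) * Q' = (c1 * d2 - c2 * d1) * (x * Q')"
    by (simp_all add: ac_simps)
  then show "x * (c1 * d2 - c2 * d1) * P' - (e1 * d2 - f1 * c2) * P = - (e1 * d1 - f1 * c1) * Q"
    and "x * (c1 * d2 - c2 * d1) * Q' + (e2 * d1 - f2 * c1) * Q = (e2 * d2 - f2 * c2) * P"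
    unfolding assms by (simp_all add: algebra_simps)
qed

theorem mainTheorem6:
  fixes N n j :: nat and p lam mu :: real
  assumes "0 < p" and "p < 1" and "0 < lam" and "0 < mu"
    and "3 \<le> n" and "n \<le> N"
  shows "\<exists>S :: real set. finite S \<and> (\<forall>x. x \<notin> S \<longrightarrow>
      Theta N p lam mu j n x * bnabla (poly (KS N p lam mu j n)) x
        + Lam N p lam mu j n x 2 1 * poly (KS N p lam mu j n) x
      = Lam N p lam mu j n x 1 1 * poly (KS N p lam mu j (n - 1)) x
    \<and> Theta N p lam mu j n x * bnabla (poly (KS N p lam mu j (n - 1))) x
        + Lam N p lam mu j n x 1 2 * poly (KS N p lam mu j (n - 1)) x
      = Lam N p lam mu j n x 2 2 * poly (KS N p lam mu j n) x)"
proof (intro exI conjI allI impI)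
  show "finite (real ` {..Suc (N + j)})" by simp
next
  fix x assume x: "x \<notin> real ` {..Suc (N + j)}"
  then have x': "x \<notin> real ` {..N + j}"
    by auto
  have "0 \<le> lam" "0 \<le> mu"
    using assms(3,4) by simp_all
  note hyps = assms(5,6,1,2) this
  have conn: "poly (KS N p lam mu j n) x = C1 N p lam mu j n x * Kr N p n x + D1 N p lam mu j n x * Kr N p (n - 1) x"
    by (rule KS_connection) (use hyps x' in auto)
  have diff: "x * bnabla (poly (KS N p lam mu j n)) x
      = E1 N p lam mu j n x * Kr N p n x + F1 N p lam mu j n x * Kr N p (n - 1) x"
    by (rule KS_backward_diff) (use hyps x in auto)
  show "Theta N p lam mu j n x * bnabla (poly (KS N p lam mu j n)) x
        + Lam N p lam mu j n x 2 1 * poly (KS N p lam mu j n) x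
      = Lam N p lam mu j n x 1 1 * poly (KS N p lam mu j (n - 1)) x"
    and "Theta N p lam mu j n x * bnabla (poly (KS N p lam mu j (n - 1))) x
        + Lam N p lam mu j n x 1 2 * poly (KS N p lam mu j (n - 1)) x
      = Lam N p lam mu j n x 2 2 * poly (KS N p lam mu j n) x"
    using ladder_identities[OF conn KS_pred_connection[OF hyps x'] diff KS_pred_backward_diff[OF hyps x]]
    unfolding Theta_def Lam_def Cf_def Df_def Ef_def Ff_def by (simp_all add: algebra_simps)
qed

end
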